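(* Let $T$ be the BFS tree produced by temporal BFS on a temporal graph $G=(V,E)$ from source $s$ with starting time $t_s$, let $v\neq s$, and let $v_o$ be an occurrence of $v$ in $T$ with level $d$ and time $\tau$. Then $\tau$ is the earliest time at which $s$ can reach $v$ within $d$ hops starting from $t_s$, i.e. $\tau=\min\{t_{end}(P)\}$ where $P$ ranges over all temporal paths from $s$ to $v$ starting at or after $t_s$ with at most $d$ hops.
   Context: A temporal graph is a pair $G=(V,E)$ where $V$ is a finite set of vertices and $E$ is a finite set of temporal edges, i.e. triples $(u,v,t)$ with $u,v\in V$, $u\neq v$, $t\in\mathbb{R}$ (the time at which the edge is active); distinct elements of $E$ are distinct triples. Fix $t_s\in\mathbb{R}$ and $s\in V$. A temporal path from $x$ to $y$ (starting at or after $t_s$) is a sequence $P=\langle (w_1,w_2,t_1),\dots,(w_k,w_{k+1},t_k)\rangle$ of $k\ge1$ edges of $E$ with $w_1=x$, $w_{k+1}=y$ and $t_s\le t_1\le t_2\le\dots\le t_k$; its number of hops is $k$ and $t_{end}(P)=t_k$. Temporal BFS. Records are tuples $(x,d,\tau,p)$ (vertex $x$, level $d$, time $\tau$, predecessor record $p$ or none); every record ever created is an occurrence (node) of the BFS tree $T$, rooted at the initial record, with a tree edge from the predecessor record to the record; the level and time of an occurrence are the final values of its fields. For each $x\in V$ a current value $\sigma(x)$ is kept, initially $\infty$, and set to $\tau$ whenever a record of $x$ is created or its time is updated to $\tau$. Initially the FIFO queue $Q$ contains only $(s,0,t_s,\text{none})$ and $\sigma(s)=t_s$; no edge is traversed.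 While $Q\neq\emptyset$: pop the front record $R=(u,d_u,\sigma_u,p_u)$; let $B$ be the set of edges $(u,v,t)\in E$ not yet traversed with $\sigma_u\le t$; for each vertex $v$ such that $B$ contains an edge to $v$ (in any order), let $e=(u,v,t)$ be the edge of $B$ to $v$ with smallest $t$, mark $e$ traversed, and: (i) if $Q$ contains no record of $v$ and $\sigma(v)>t$, create $(v,d_u+1,t,R)$ and append it to $Q$; (ii) if $Q$ contains a record of $v$ with level $d_u+1$ and $\sigma(v)>t$, set that record's time to $t$ and predecessor to $R$; (iii) if $Q$ contains a record of $v$ but none with level $d_u+1$, and $\sigma(v)>t$, create $(v,d_u+1,t,R)$ and append it to $Q$. *)

theory Defs
  imports Main "HOL-Library.Extended_Real"
begin

type_synonym 'v tedge = "'v \<times> 'v \<times> real"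

definition src :: "'v tedge \<Rightarrow> 'v" where "src e = fst e"
definition dst :: "'v tedge \<Rightarrow> 'v" where "dst e = fst (snd e)"
definition tm  :: "'v tedge \<Rightarrow> real" where "tm e = snd (snd e)"

definition temporal_path :: "'v tedge set \<Rightarrow> real \<Rightarrow> 'v \<Rightarrow> 'v \<Rightarrow> 'v tedge list \<Rightarrow> bool" where
  "temporal_path E ts x y P \<longleftrightarrow>
     P \<noteq> [] \<and> set P \<subseteq> E \<and> src (hd P) = x \<and> dst (last P) = y \<and>
     (\<forall>i. Suc i < length P \<longrightarrow> dst (P ! i) = src (P ! Suc i)) \<and>
     ts \<le> tm (hd P) \<and> sorted (map tm P)"

definition t_end :: "'v tedge list \<Rightarrow> real" where "t_end P = tm (last P)"

(* BFS records (vertex, level, time, predecessor record index); a record is identified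
   by its index in the list of all records ever created (= the occurrences of T). *)
type_synonym 'v brec = "'v \<times> nat \<times> real \<times> nat option"

definition rvert :: "'v brec \<Rightarrow> 'v" where "rvert R = fst R"
definition rlev :: "'v brec \<Rightarrow> nat" where "rlev R = fst (snd R)"
definition rtime :: "'v brec \<Rightarrow> real" where "rtime R = fst (snd (snd R))"

record 'v bstate =
  recs :: "'v brec list"
  bq   :: "nat list"
  trav :: "'v tedge set"
  sig  :: "'v \<Rightarrow> ereal"

definition tbfs_init :: "'v \<Rightarrow> real \<Rightarrow> 'v bstate" where
  "tbfs_init s ts = \<lparr>recs = [(s, 0, ts, None)], bq = [0], trav = {},
                      sig = (\<lambda>_. \<infinity>)(s := ereal ts)\<rparr>"

definition handle :: "'v tedge set \<Rightarrow> nat \<Rightarrow> 'v \<Rightarrow> 'v bstate \<Rightarrow> 'v bstate" where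
  "handle B r v st =
     (let u = rvert (recs st ! r); du = rlev (recs st ! r);
          t = Min {tm e | e. e \<in> B \<and> dst e = v};
          st1 = st\<lparr>trav := insert (u, v, t) (trav st)\<rparr>;
          newrec = (v, Suc du, t, Some r);
          create = st1\<lparr>recs := recs st @ [newrec], bq := bq st @ [length (recs st)],
                       sig := (sig st)(v := ereal t)\<rparr>
      in if \<not> (\<exists>i\<in>set (bq st). rvert (recs st ! i) = v) \<and> ereal t < sig st v then create
         else if (\<exists>i\<in>set (bq st). rvert (recs st ! i) = v \<and> rlev (recs st ! i) = Suc du)
                 \<and> ereal t < sig st v then
           (let i = (SOME i. i \<in> set (bq st) \<and> rvert (recs st ! i) = v \<and> rlev (recs st ! i) = Suc du)
            in st1\<lparr>recs := (recs st)[i := newrec], sig := (sig st)(v := ereal t)\<rparr>)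
         else if (\<exists>i\<in>set (bq st). rvert (recs st ! i) = v)
                 \<and> \<not> (\<exists>i\<in>set (bq st). rvert (recs st ! i) = v \<and> rlev (recs st ! i) = Suc du)
                 \<and> ereal t < sig st v then create
         else st1)"

inductive tbfs_step :: "'v tedge set \<Rightarrow> 'v bstate \<Rightarrow> 'v bstate \<Rightarrow> bool" for E where
  "bq st = r # rest \<Longrightarrow>
   B = {e \<in> E. src e = rvert (recs st ! r) \<and> e \<notin> trav st \<and> rtime (recs st ! r) \<le> tm e} \<Longrightarrow>
   distinct vs \<Longrightarrow> set vs = dst ` B \<Longrightarrow>
   tbfs_step E st (fold (handle B r) vs (st\<lparr>bq := rest\<rparr>))"

end

theory Submission
  imports Defs
begin

(* Every record (v, d, tau) of a vertex v other than s witnesses a temporal path from s to v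
   with at most d hops arriving at time tau: it extends the path of its predecessor by the
   edge along which it was created or last updated. Conversely, once a record is popped,
   every edge leaving its vertex no earlier than its time has produced a record of the target
   with level at most one more and time at most that of the edge. When the queue is empty
   all records are popped, so along any temporal path P from s there is a record of v of
   level at most |P| and time at most t_end P. Finally, the records of one vertex have
   distinct levels and times that decrease with the level, so the record of level d has
   the least time among the records of level at most d. *)

lemma edge_simps [simp]: "src (u, v, t) = u" "dst (u, v, t) = v" "tm (u, v, t) = t"
  by (simp_all add: src_def dst_def tm_def)

lemma edge_eta: "(src e, dst e, tm e) = e"
  by (simp add: src_def dst_def tm_def)

lemma temporal_path_snoc:
  assumes "temporal_path E ts s u P" "t_end P \<le> t" "(u, v, t) \<in> E"
  shows "temporal_path E ts s v (P @ [(u, v, t)])"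
proof -
  have "P \<noteq> []" and last: "dst (last P) = u" and sorted: "sorted (map tm P)"
    using assms(1) by (auto simp: temporal_path_def)
  have "x \<le> t" if x: "x \<in> set (map tm P)" for x
  proof -
    obtain i where "i < length (map tm P)" "map tm P ! i = x"
      using x by (meson in_set_conv_nth)
    then have "x \<le> map tm P ! (length P - 1)"
      using sorted_nth_mono[OF sorted, of i "length P - 1"] by simp
    then show ?thesis using assms(2) \<open>P \<noteq> []\<close> by (simp add: t_end_def last_conv_nth)
  qed
  with sorted have "sorted (map tm (P @ [(u, v, t)]))" by (simp add: sorted_append)
  moreover have "dst ((P @ [(u, v, t)]) ! i) = src ((P @ [(u, v, t)]) ! Suc i)"
    if "Suc i < Suc (length P)" for i
  proof (cases "Suc i < length P")
    case True
    then show ?thesis using assms(1) by (simp add: temporal_path_def nth_append)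
  next
    case False
    then have "i = length P - 1" using that by simp
    then show ?thesis using last \<open>P \<noteq> []\<close> by (simp add: nth_append last_conv_nth)
  qed
  ultimately show ?thesis using assms(1,3) by (auto simp: temporal_path_def)
qed

section \<open>Expanded records bound arrival times\<close>

lemma rec_simps [simp]: "rvert (v, d, t, p) = v" "rlev (v, d, t, p) = d" "rtime (v, d, t, p) = t"
  by (simp_all add: rvert_def rlev_def rtime_def)

abbreviation nrecs :: "'v bstate \<Rightarrow> nat" where "nrecs st \<equiv> length (recs st)"
abbreviation vert :: "'v bstate \<Rightarrow> nat \<Rightarrow> 'v" where "vert st a \<equiv> rvert (recs st ! a)"
abbreviation lev :: "'v bstate \<Rightarrow> nat \<Rightarrow> nat" where "lev st a \<equiv> rlev (recs st ! a)"
abbreviation time :: "'v bstate \<Rightarrow> nat \<Rightarrow> real" where "time st a \<equiv> rtime (recs st ! a)"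

definition reached :: "'v bstate \<Rightarrow> 'v \<Rightarrow> nat \<Rightarrow> real \<Rightarrow> bool" where
  "reached st w k T \<longleftrightarrow> (\<exists>a<nrecs st. vert st a = w \<and> lev st a \<le> k \<and> time st a \<le> T)"

lemma reached_mono: "reached st w k T \<Longrightarrow> k \<le> k' \<Longrightarrow> T \<le> T' \<Longrightarrow> reached st w k' T'"
  unfolding reached_def by (blast intro: le_trans order_trans)

definition expanded :: "'v tedge set \<Rightarrow> 'v bstate \<Rightarrow> nat \<Rightarrow> bool" where
  "expanded E st a \<longleftrightarrow> (\<forall>e\<in>E. src e = vert st a \<and> time st a \<le> tm e \<longrightarrow>
      reached st (dst e) (Suc (lev st a)) (tm e))"

lemma reached_along_edge:
  assumes "reached st x k T" and "\<forall>a<nrecs st. expanded E st a"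
    and "e \<in> E" "src e = x" "T \<le> tm e"
  shows "reached st (dst e) (Suc k) (tm e)"
proof -
  obtain a where a: "a < nrecs st" "vert st a = x" "lev st a \<le> k" "time st a \<le> T"
    using assms(1) unfolding reached_def by blast
  then have "reached st (dst e) (Suc (lev st a)) (tm e)"
    using assms(2-5) unfolding expanded_def by force
  then show ?thesis by (rule reached_mono) (use a(3) in auto)
qed

lemma temporal_path_reached:
  assumes exp: "\<forall>a<nrecs st. expanded E st a" and source: "reached st s 0 ts"
    and P: "temporal_path E ts s v P"
  shows "reached st v (length P) (t_end P)"
proof -
  have "reached st (dst (P ! j)) (Suc j) (tm (P ! j))" if "j < length P" for j
    using that
  proof (induction j)
    case 0
    then have "P ! 0 \<in> E" "src (P ! 0) = s" "ts \<le> tm (P ! 0)"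
      using P by (auto simp: temporal_path_def hd_conv_nth)
    then show ?case by (rule reached_along_edge[OF source exp])
  next
    case (Suc j)
    have "P ! Suc j \<in> E" "src (P ! Suc j) = dst (P ! j)" "tm (P ! j) \<le> tm (P ! Suc j)"
      using P Suc.prems by (auto simp: temporal_path_def sorted_iff_nth_mono)
    then show ?case using Suc by (intro reached_along_edge[OF _ exp]) simp_all
  qed
  from this[of "length P - 1"] show ?thesis
    using P by (auto simp: temporal_path_def t_end_def last_conv_nth)
qed

section \<open>Invariants of temporal BFS\<close>

definition source_record :: "'v \<Rightarrow> real \<Rightarrow> 'v bstate \<Rightarrow> bool" where
  "source_record s ts st \<longleftrightarrow> 0 < nrecs st \<and> recs st ! 0 = (s, 0, ts, None) \<and>
     sig st s = ereal ts \<and> (\<forall>a<nrecs st. ts \<le> time st a)"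

definition queue_wf :: "'v bstate \<Rightarrow> bool" where
  "queue_wf st \<longleftrightarrow> distinct (bq st) \<and> set (bq st) \<subseteq> {..<nrecs st}"

definition sig_min :: "'v bstate \<Rightarrow> bool" where
  "sig_min st \<longleftrightarrow> (\<forall>a<nrecs st. sig st (vert st a) \<le> ereal (time st a)) \<and>
     (\<forall>w. sig st w = \<infinity> \<or> (\<exists>a<nrecs st. vert st a = w \<and> sig st w = ereal (time st a)))"

definition levels_consistent :: "'v bstate \<Rightarrow> bool" where
  "levels_consistent st \<longleftrightarrow> (\<forall>a<nrecs st. \<forall>b<nrecs st. vert st a = vert st b \<longrightarrow>
     (lev st a = lev st b \<longrightarrow> a = b) \<and> (lev st a < lev st b \<longrightarrow> time st b \<le> time st a))"

definition records_sound :: "'v tedge set \<Rightarrow> 'v \<Rightarrow> real \<Rightarrow> 'v bstate \<Rightarrow> bool" where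
  "records_sound E s ts st \<longleftrightarrow> (\<forall>a<nrecs st. vert st a \<noteq> s \<longrightarrow>
     (\<exists>P. temporal_path E ts s (vert st a) P \<and> length P \<le> lev st a \<and> t_end P = time st a))"

(* An edge is traversed only once, so it is missing from B when a later record of its source
   is popped; it is accounted for by the processed record that traversed it, whose level is
   at most that of any record popped afterwards. *)
definition trav_covered :: "'v bstate \<Rightarrow> bool" where
  "trav_covered st \<longleftrightarrow> (\<forall>e\<in>trav st. \<exists>a<nrecs st. a \<notin> set (bq st) \<and>
     reached st (dst e) (Suc (lev st a)) (tm e))"

definition record_inv :: "'v tedge set \<Rightarrow> 'v \<Rightarrow> real \<Rightarrow> 'v bstate \<Rightarrow> bool" where
  "record_inv E s ts st \<longleftrightarrow> source_record s ts st \<and> queue_wf st \<and> sig_min st \<and>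
     levels_consistent st \<and> records_sound E s ts st \<and> trav_covered st"

definition tbfs_inv :: "'v tedge set \<Rightarrow> 'v \<Rightarrow> real \<Rightarrow> 'v bstate \<Rightarrow> bool" where
  "tbfs_inv E s ts st \<longleftrightarrow> record_inv E s ts st \<and> sorted (map (lev st) (bq st)) \<and>
     (\<forall>a<nrecs st. \<forall>b\<in>set (bq st). lev st a \<le> Suc (lev st b)) \<and>
     (\<forall>a<nrecs st. a \<notin> set (bq st) \<longrightarrow>
        (\<forall>b\<in>set (bq st). lev st a \<le> lev st b) \<and> expanded E st a)"

definition processing_inv :: "'v tedge set \<Rightarrow> 'v \<Rightarrow> real \<Rightarrow> nat \<Rightarrow> 'v brec \<Rightarrow> 'v bstate \<Rightarrow> bool" where
  "processing_inv E s ts r R st \<longleftrightarrow> record_inv E s ts st \<and>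
     r < nrecs st \<and> recs st ! r = R \<and> r \<notin> set (bq st) \<and> sorted (map (lev st) (bq st)) \<and>
     (\<forall>b\<in>set (bq st). rlev R \<le> lev st b) \<and> (\<forall>a<nrecs st. lev st a \<le> Suc (rlev R)) \<and>
     (\<forall>a<nrecs st. a \<notin> set (bq st) \<longrightarrow> lev st a \<le> rlev R \<and> (a \<noteq> r \<longrightarrow> expanded E st a))"

lemma levels_consistentD:
  assumes "levels_consistent st" "a < nrecs st" "b < nrecs st" "vert st a = vert st b"
  shows "lev st a = lev st b \<Longrightarrow> a = b" and "lev st a < lev st b \<Longrightarrow> time st b \<le> time st a"
  using assms unfolding levels_consistent_def by blast+

lemma levels_consistent_time_le:
  assumes "levels_consistent st" "i < nrecs st" "recs st ! i = (v, d, \<tau>, p)" "reached st v d T"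
  shows "\<tau> \<le> T"
proof -
  obtain a where a: "a < nrecs st" "vert st a = v" "lev st a \<le> d" "time st a \<le> T"
    using assms(4) unfolding reached_def by blast
  then have "time st i \<le> time st a"
    using levels_consistentD[OF assms(1) a(1) assms(2)] assms(3) by (cases "lev st a = d") auto
  then show ?thesis using a(4) assms(3) by simp
qed

section \<open>Improving a record\<close>

definition refines :: "'v bstate \<Rightarrow> 'v bstate \<Rightarrow> bool" where
  "refines st st' \<longleftrightarrow> nrecs st \<le> nrecs st' \<and>
     (\<forall>a<nrecs st. vert st' a = vert st a \<and> lev st' a = lev st a \<and> time st' a \<le> time st a)"

lemma refines_refl: "refines st st"
  by (simp add: refines_def)

lemma refines_trav_update [simp]: "refines st (st'\<lparr>trav := X\<rparr>) = refines st st'"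
  by (simp add: refines_def)

lemma refines_trans:
  assumes "refines st1 st2" "refines st2 st3"
  shows "refines st1 st3"
proof -
  have "vert st3 a = vert st1 a \<and> lev st3 a = lev st1 a \<and> time st3 a \<le> time st1 a"
    if a: "a < nrecs st1" for a
  proof -
    have "a < nrecs st2" using assms(1) a unfolding refines_def by linarith
    then have "vert st3 a = vert st2 a \<and> lev st3 a = lev st2 a \<and> time st3 a \<le> time st2 a"
      using assms(2) unfolding refines_def by blast
    moreover have "vert st2 a = vert st1 a \<and> lev st2 a = lev st1 a \<and> time st2 a \<le> time st1 a"
      using assms(1) a unfolding refines_def by blast
    ultimately show ?thesis by auto
  qed
  moreover have "nrecs st1 \<le> nrecs st3" using assms unfolding refines_def by linarith
  ultimately show ?thesis unfolding refines_def by blast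
qed

lemma reached_refines:
  assumes "reached st w k T" "refines st st'"
  shows "reached st' w k T"
proof -
  obtain a where a: "a < nrecs st" "vert st a = w" "lev st a \<le> k" "time st a \<le> T"
    using assms(1) unfolding reached_def by blast
  then have "a < nrecs st'" "vert st' a = w" "lev st' a \<le> k" "time st' a \<le> T"
    using assms(2) unfolding refines_def by auto
  then show ?thesis unfolding reached_def by blast
qed

lemma expanded_refines:
  assumes "expanded E st a" "refines st st'" "recs st' ! a = recs st ! a"
  shows "expanded E st' a"
  using assms(1) reached_refines[OF _ assms(2)] unfolding expanded_def assms(3) by blast

(* The two ways in which handle lowers sig v: cases (i) and (iii) append a fresh record,
   case (ii) overwrites the queued record of v at the same level. *)
definition improves :: "'v bstate \<Rightarrow> nat \<Rightarrow> 'v brec \<Rightarrow> 'v bstate \<Rightarrow> bool" where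
  "improves st j R st' \<longleftrightarrow> nrecs st \<le> nrecs st' \<and> j < nrecs st' \<and> recs st' ! j = R \<and>
     (\<forall>a<nrecs st'. a \<noteq> j \<longrightarrow> a < nrecs st \<and> recs st' ! a = recs st ! a) \<and>
     sig st' = (sig st)(rvert R := ereal (rtime R)) \<and> trav st' = trav st"

lemma improves_new: "improves st j R st' \<Longrightarrow> recs st' ! j = R"
  unfolding improves_def by blast

lemma improves_other:
  "improves st j R st' \<Longrightarrow> a < nrecs st' \<Longrightarrow> a \<noteq> j \<Longrightarrow> a < nrecs st \<and> recs st' ! a = recs st ! a"
  unfolding improves_def by blast

lemma improves_old:
  "improves st j R st' \<Longrightarrow> a < nrecs st \<Longrightarrow> a \<noteq> j \<Longrightarrow> recs st' ! a = recs st ! a"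
  unfolding improves_def by (meson less_le_trans)

lemma improves_refines:
  assumes "improves st j (v, k, t, p) st'"
    and "j < nrecs st \<Longrightarrow> vert st j = v \<and> lev st j = k \<and> t \<le> time st j"
  shows "refines st st'"
proof -
  have "vert st' a = vert st a \<and> lev st' a = lev st a \<and> time st' a \<le> time st a"
    if "a < nrecs st" for a
    using that assms improves_new[OF assms(1)] improves_old[OF assms(1)] by (cases "a = j") auto
  moreover have "nrecs st \<le> nrecs st'" using assms(1) by (simp add: improves_def)
  ultimately show ?thesis unfolding refines_def by blast
qed

lemma source_record_improve:
  assumes "source_record s ts st" "improves st j (v, k, t, p) st'" "j \<noteq> 0" "v \<noteq> s" "ts \<le> t"
  shows "source_record s ts st'"
proof -
  have "nrecs st \<le> nrecs st'" "sig st' = (sig st)(v := ereal t)"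
    using assms(2) by (simp_all add: improves_def)
  moreover have "ts \<le> time st' a" if "a < nrecs st'" for a
    using assms(1,5) improves_new[OF assms(2)] improves_other[OF assms(2) that]
    unfolding source_record_def by (cases "a = j") auto
  ultimately show ?thesis
    using assms(1,3,4) improves_old[OF assms(2), of 0] unfolding source_record_def by auto
qed

lemma sig_min_less_time:
  assumes "sig_min st" "a < nrecs st" "ereal t < sig st (vert st a)"
  shows "t < time st a"
proof -
  have "sig st (vert st a) \<le> ereal (time st a)" using assms(1,2) unfolding sig_min_def by blast
  with assms(3) have "ereal t < ereal (time st a)" by (rule less_le_trans)
  then show ?thesis by simp
qed

lemma sig_min_improve:
  assumes "sig_min st" "improves st j (v, k, t, p) st'" "ereal t < sig st v"
    and "j < nrecs st \<Longrightarrow> vert st j = v"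
  shows "sig_min st'"
proof -
  have sig': "sig st' = (sig st)(v := ereal t)" using assms(2) by (simp add: improves_def)
  note new = improves_new[OF assms(2)]
  have "sig st' (vert st' a) \<le> ereal (time st' a)" if a: "a < nrecs st'" for a
  proof (cases "a = j")
    case True
    then show ?thesis using sig' new by simp
  next
    case False
    then have a_old: "a < nrecs st" "recs st' ! a = recs st ! a"
      using improves_other[OF assms(2) a] by auto
    show ?thesis
    proof (cases "vert st a = v")
      case True
      then have "t < time st a" using sig_min_less_time[OF assms(1) a_old(1)] assms(3) by simp
      then show ?thesis using True a_old sig' by simp
    next
      case False
      then show ?thesis using a_old sig' assms(1) unfolding sig_min_def by simp
    qed
  qed
  moreover have "sig st' w = \<infinity> \<or> (\<exists>a<nrecs st'. vert st' a = w \<and> sig st' w = ereal (time st' a))"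
    for w
  proof (cases "w = v")
    case True
    then show ?thesis using sig' new assms(2) unfolding improves_def by auto
  next
    case False
    have "a \<noteq> j \<and> a < nrecs st'" if "a < nrecs st" "vert st a = w" for a
      using that False assms(2,4) unfolding improves_def by auto
    then show ?thesis using False sig' assms(1) improves_old[OF assms(2)] unfolding sig_min_def
      by (metis fun_upd_other)
  qed
  ultimately show ?thesis unfolding sig_min_def by blast
qed

lemma levels_consistent_improve:
  assumes "levels_consistent st" "improves st j (v, k, t, p) st'"
    and "\<And>a. a < nrecs st \<Longrightarrow> vert st a = v \<Longrightarrow> lev st a \<le> k \<and> t \<le> time st a \<and> (lev st a = k \<longrightarrow> a = j)"
  shows "levels_consistent st'"
  unfolding levels_consistent_def
proof (intro allI impI)
  fix a b assume a: "a < nrecs st'" and b: "b < nrecs st'" and ab: "vert st' a = vert st' b"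
  note new = improves_new[OF assms(2)] and old = improves_other[OF assms(2)]
  show "(lev st' a = lev st' b \<longrightarrow> a = b) \<and> (lev st' a < lev st' b \<longrightarrow> time st' b \<le> time st' a)"
  proof (cases "a = j"; cases "b = j")
    assume "a = j" "b \<noteq> j"
    with old[OF b] ab new have "b < nrecs st" "recs st' ! b = recs st ! b" "vert st b = v" by auto
    with assms(3)[of b] \<open>a = j\<close> \<open>b \<noteq> j\<close> new show ?thesis by auto
  next
    assume "a \<noteq> j" "b = j"
    with old[OF a] ab new have "a < nrecs st" "recs st' ! a = recs st ! a" "vert st a = v" by auto
    with assms(3)[of a] \<open>a \<noteq> j\<close> \<open>b = j\<close> new show ?thesis by auto
  next
    assume "a \<noteq> j" "b \<noteq> j"
    with old[OF a] old[OF b] ab levels_consistentD[OF assms(1)] show ?thesis by auto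
  qed simp
qed

lemma records_sound_improve:
  assumes "records_sound E s ts st" "improves st j (v, k, t, p) st'"
    and "v \<noteq> s \<Longrightarrow> \<exists>P. temporal_path E ts s v P \<and> length P \<le> k \<and> t_end P = t"
  shows "records_sound E s ts st'"
  unfolding records_sound_def
proof (intro allI impI)
  fix a assume "a < nrecs st'" "vert st' a \<noteq> s"
  then show "\<exists>P. temporal_path E ts s (vert st' a) P \<and> length P \<le> lev st' a \<and> t_end P = time st' a"
    using assms improves_new[OF assms(2)] improves_other[OF assms(2)] unfolding records_sound_def
    by (cases "a = j") auto
qed

lemma sound_record_edge_path:
  assumes "records_sound E s ts st" "source_record s ts st" "r < nrecs st" "recs st ! r = (u, du, sr, pr)"
    and "(u, v, t) \<in> E" "sr \<le> t"
  shows "\<exists>P. temporal_path E ts s v P \<and> length P \<le> Suc du \<and> t_end P = t"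
proof (cases "u = s")
  case True
  have "ts \<le> sr" using assms(2-4) unfolding source_record_def by force
  then have "temporal_path E ts s v [(u, v, t)]" using True assms(5,6) by (simp add: temporal_path_def)
  then show ?thesis by (intro exI[of _ "[(u, v, t)]"]) (simp add: t_end_def)
next
  case False
  then obtain P where P: "temporal_path E ts s u P" "length P \<le> du" "t_end P = sr"
    using assms(1,3,4) unfolding records_sound_def by force
  then have "temporal_path E ts s v (P @ [(u, v, t)])"
    using temporal_path_snoc[OF P(1) _ assms(5)] assms(6) by simp
  then show ?thesis using P(2) by (intro exI[of _ "P @ [(u, v, t)]"]) (simp add: t_end_def)
qed

lemma reached_update [simp]:
  "reached (st\<lparr>bq := q\<rparr>) = reached st" "reached (st\<lparr>trav := X\<rparr>) = reached st"
  by (simp_all add: reached_def fun_eq_iff)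

lemma expanded_update [simp]:
  "expanded E (st\<lparr>bq := q\<rparr>) = expanded E st" "expanded E (st\<lparr>trav := X\<rparr>) = expanded E st"
  by (simp_all add: expanded_def fun_eq_iff)

lemma record_components_update [simp]:
  "source_record s ts (st\<lparr>bq := q\<rparr>) = source_record s ts st"
  "source_record s ts (st\<lparr>trav := X\<rparr>) = source_record s ts st"
  "sig_min (st\<lparr>bq := q\<rparr>) = sig_min st" "sig_min (st\<lparr>trav := X\<rparr>) = sig_min st"
  "levels_consistent (st\<lparr>bq := q\<rparr>) = levels_consistent st"
  "levels_consistent (st\<lparr>trav := X\<rparr>) = levels_consistent st"
  "records_sound E s ts (st\<lparr>bq := q\<rparr>) = records_sound E s ts st"
  "records_sound E s ts (st\<lparr>trav := X\<rparr>) = records_sound E s ts st"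
  by (simp_all add: source_record_def sig_min_def levels_consistent_def records_sound_def)

lemma processing_inv_traverse:
  assumes "processing_inv E s ts r R st" "reached st v (Suc (rlev R)) t"
  shows "processing_inv E s ts r R (st\<lparr>trav := insert (u, v, t) (trav st)\<rparr>)"
proof -
  have "trav_covered st" "r < nrecs st" "r \<notin> set (bq st)" "recs st ! r = R"
    using assms(1) unfolding processing_inv_def record_inv_def by auto
  with assms(2) have "trav_covered (st\<lparr>trav := insert (u, v, t) (trav st)\<rparr>)"
    unfolding trav_covered_def by (simp, blast)
  then show ?thesis using assms(1) unfolding processing_inv_def record_inv_def queue_wf_def by simp
qed

locale improvement =
  fixes E :: "'v tedge set" and s :: 'v and ts :: real and r :: nat and u :: 'v and du :: nat
    and sr :: real and pr :: "nat option" and st :: "'v bstate" and v :: 'v and t :: real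
    and j :: nat and st' :: "'v bstate"
  assumes inv: "processing_inv E s ts r (u, du, sr, pr) st"
    and edge: "(u, v, t) \<in> E" and edge_time: "sr \<le> t" and better: "ereal t < sig st v"
    and improves: "improves st j (v, Suc du, t, Some r) st'"
    and old_index: "j < nrecs st \<Longrightarrow> j \<in> set (bq st) \<and> vert st j = v \<and> lev st j = Suc du"
    and unique: "\<And>a. a < nrecs st \<Longrightarrow> vert st a = v \<Longrightarrow> lev st a = Suc du \<Longrightarrow> a = j"
    and queue: "bq st' = (if j < nrecs st then bq st else bq st @ [j])"
begin

lemma inv_facts:
  shows "source_record s ts st" "queue_wf st" "sig_min st" "levels_consistent st"
    "records_sound E s ts st" "trav_covered st"
    and "r < nrecs st" "recs st ! r = (u, du, sr, pr)" "r \<notin> set (bq st)"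
    and "sorted (map (lev st) (bq st))" "\<And>b. b \<in> set (bq st) \<Longrightarrow> du \<le> lev st b"
    and "\<And>a. a < nrecs st \<Longrightarrow> lev st a \<le> Suc du"
    and "\<And>a. a < nrecs st \<Longrightarrow> a \<notin> set (bq st) \<Longrightarrow> lev st a \<le> du"
    and "\<And>a. a < nrecs st \<Longrightarrow> a \<notin> set (bq st) \<Longrightarrow> a \<noteq> r \<Longrightarrow> expanded E st a"
  using inv unfolding processing_inv_def record_inv_def by auto

lemma time_less_old_records: "a < nrecs st \<Longrightarrow> vert st a = v \<Longrightarrow> t < time st a"
  using sig_min_less_time[OF inv_facts(3)] better by simp

lemma target_not_source: "v \<noteq> s"
proof
  assume "v = s"
  have "ts \<le> sr" using inv_facts(1,7,8) unfolding source_record_def by force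
  then have "ereal ts \<le> ereal t" using edge_time by simp
  then show False using better inv_facts(1) \<open>v = s\<close> unfolding source_record_def by simp
qed

lemma processed_not_improved: "a < nrecs st \<Longrightarrow> a \<notin> set (bq st) \<Longrightarrow> a \<noteq> j"
  using old_index by auto

lemma refines: "refines st st'"
  using improves_refines[OF improves] old_index time_less_old_records by (auto intro: less_imp_le)

lemma queue_set: "set (bq st') = insert j (set (bq st))"
  using queue old_index by auto

lemma record_inv_improved: "record_inv E s ts st'"
  unfolding record_inv_def
proof (intro conjI)
  have "j \<noteq> 0"
  proof
    assume "j = 0"
    with inv_facts(1) have "j < nrecs st" "vert st j = s" unfolding source_record_def by auto
    with old_index target_not_source show False by simp
  qed
  moreover have "ts \<le> t" using inv_facts(1,7,8) edge_time unfolding source_record_def by force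
  ultimately show "source_record s ts st'"
    using source_record_improve[OF inv_facts(1) improves] target_not_source by blast
  show "queue_wf st'"
    using inv_facts(2) queue improves unfolding queue_wf_def improves_def by auto
  show "sig_min st'"
    using sig_min_improve[OF inv_facts(3) improves better] old_index by blast
  show "levels_consistent st'"
    using levels_consistent_improve[OF inv_facts(4) improves] inv_facts(12) time_less_old_records unique
    by (meson less_imp_le)
  show "records_sound E s ts st'"
    using records_sound_improve[OF inv_facts(5) improves]
      sound_record_edge_path[OF inv_facts(5,1,7,8) edge edge_time] by blast
  show "trav_covered st'"
    unfolding trav_covered_def
  proof
    fix e assume "e \<in> trav st'"
    then obtain a where a: "a < nrecs st" "a \<notin> set (bq st)" "reached st (dst e) (Suc (lev st a)) (tm e)"
      using inv_facts(6) improves unfolding trav_covered_def improves_def by auto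
    then have "a < nrecs st'" "a \<notin> set (bq st')" "recs st' ! a = recs st ! a"
      using improves queue_set processed_not_improved improves_old[OF improves]
      unfolding improves_def by auto
    with a(3) reached_refines[OF _ refines]
    show "\<exists>a<nrecs st'. a \<notin> set (bq st') \<and> reached st' (dst e) (Suc (lev st' a)) (tm e)"
      by auto
  qed
qed

lemma lev_preserved: "a < nrecs st \<Longrightarrow> lev st' a = lev st a"
  using refines unfolding refines_def by blast

lemma processing_inv_improved: "processing_inv E s ts r (u, du, sr, pr) st'"
proof -
  note new = improves_new[OF improves] and other = improves_other[OF improves]
  have len: "nrecs st \<le> nrecs st'" "j < nrecs st'" using improves unfolding improves_def by auto
  have "r \<noteq> j" using processed_not_improved inv_facts(7,9) by blast
  have queue_levs: "map (lev st') (bq st) = map (lev st) (bq st)"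
    using lev_preserved inv_facts(2) unfolding queue_wf_def by auto
  have sorted_old: "sorted (map (lev st') (bq st))" unfolding queue_levs by (rule inv_facts(10))
  have "sorted (map (lev st') (bq st'))"
  proof (cases "j < nrecs st")
    case True
    then show ?thesis using queue sorted_old by simp
  next
    case False
    have "lev st' b \<le> lev st' j" if "b \<in> set (bq st)" for b
      using that new lev_preserved inv_facts(2,12) unfolding queue_wf_def by auto
    then show ?thesis using False queue sorted_old by (auto simp: sorted_append)
  qed
  moreover have "du \<le> lev st' b" if "b \<in> set (bq st')" for b
    using that queue_set new inv_facts(2,11) lev_preserved unfolding queue_wf_def by auto
  moreover have "lev st' a \<le> Suc du" if "a < nrecs st'" for a
    using that new other inv_facts(12) by (cases "a = j") auto
  moreover have "lev st' a \<le> du \<and> (a \<noteq> r \<longrightarrow> expanded E st' a)"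
    if "a < nrecs st'" "a \<notin> set (bq st')" for a
  proof -
    have "a \<noteq> j" "a \<notin> set (bq st)" using that queue_set by auto
    then have "a < nrecs st" "recs st' ! a = recs st ! a" using other that(1) by auto
    then show ?thesis
      using inv_facts(13,14) \<open>a \<notin> set (bq st)\<close> expanded_refines[OF _ refines] by auto
  qed
  ultimately show ?thesis
    using record_inv_improved len inv_facts(7-9) \<open>r \<noteq> j\<close> improves_old[OF improves] queue_set
    unfolding processing_inv_def by auto
qed

lemma reached_target: "reached st' v (Suc du) t"
  using improves_new[OF improves] improves unfolding reached_def improves_def by auto

lemma traversed:
  defines "st'' \<equiv> st'\<lparr>trav := insert (u, v, t) (trav st')\<rparr>"
  shows "processing_inv E s ts r (u, du, sr, pr) st'' \<and> reached st'' v (Suc du) t \<and> refines st st''"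
  using processing_inv_traverse[OF processing_inv_improved] reached_target refines unfolding st''_def by simp

end

lemma sig_min_reached:
  assumes "sig_min st" "sig st v \<le> ereal t" "\<And>a. a < nrecs st \<Longrightarrow> lev st a \<le> k"
  shows "reached st v k t"
proof -
  have "sig st v \<noteq> \<infinity>" using assms(2) by auto
  then obtain a where "a < nrecs st" "vert st a = v" "sig st v = ereal (time st a)"
    using assms(1) unfolding sig_min_def by blast
  then show ?thesis using assms(2,3) unfolding reached_def by auto
qed

lemma Min_tm_edges:
  assumes "finite B"
  shows "finite {tm e |e. e \<in> B \<and> dst e = v}" and "e \<in> B \<Longrightarrow> dst e = v \<Longrightarrow> tm e \<in> {tm e |e. e \<in> B \<and> dst e = v}"
  using assms unfolding setcompr_eq_image by (simp, blast)

lemma Min_tm_le: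
  assumes "finite B" "e \<in> B"
  shows "Min {tm e' |e'. e' \<in> B \<and> dst e' = dst e} \<le> tm e"
  using Min_le[OF Min_tm_edges(1)[OF assms(1)] Min_tm_edges(2)[OF assms refl]] .

lemma Min_tm_edge:
  assumes "finite B" "v \<in> dst ` B"
  obtains e where "e \<in> B" "dst e = v" "tm e = Min {tm e |e. e \<in> B \<and> dst e = v}"
proof -
  obtain e0 where "e0 \<in> B" "dst e0 = v" using assms(2) by blast
  then have "{tm e |e. e \<in> B \<and> dst e = v} \<noteq> {}" using Min_tm_edges(2)[OF assms(1)] by blast
  then have "Min {tm e |e. e \<in> B \<and> dst e = v} \<in> {tm e |e. e \<in> B \<and> dst e = v}"
    by (rule Min_in[OF Min_tm_edges(1)[OF assms(1)]])
  then have "\<exists>e. Min {tm e |e. e \<in> B \<and> dst e = v} = tm e \<and> e \<in> B \<and> dst e = v"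
    by (simp only: mem_Collect_eq)
  then show ?thesis using that by (elim exE conjE) simp
qed
lemma handle_no_improvement:
  "\<not> ereal t < sig st v \<Longrightarrow> t = Min {tm e |e. e \<in> B \<and> dst e = v} \<Longrightarrow>
   handle B r v st = st\<lparr>trav := insert (vert st r, v, t) (trav st)\<rparr>"
  by (simp add: handle_def Let_def)

lemma handle_creates:
  "ereal t < sig st v \<Longrightarrow> t = Min {tm e |e. e \<in> B \<and> dst e = v} \<Longrightarrow>
   \<not> (\<exists>i\<in>set (bq st). vert st i = v \<and> lev st i = Suc (lev st r)) \<Longrightarrow>
   handle B r v st = st\<lparr>recs := recs st @ [(v, Suc (lev st r), t, Some r)], bq := bq st @ [nrecs st],
     sig := (sig st)(v := ereal t), trav := insert (vert st r, v, t) (trav st)\<rparr>"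
  unfolding handle_def Let_def by auto

lemma handle_updates:
  "ereal t < sig st v \<Longrightarrow> t = Min {tm e |e. e \<in> B \<and> dst e = v} \<Longrightarrow>
   i = (SOME i. i \<in> set (bq st) \<and> vert st i = v \<and> lev st i = Suc (lev st r)) \<Longrightarrow>
   \<exists>i\<in>set (bq st). vert st i = v \<and> lev st i = Suc (lev st r) \<Longrightarrow>
   handle B r v st = st\<lparr>recs := (recs st)[i := (v, Suc (lev st r), t, Some r)],
     sig := (sig st)(v := ereal t), trav := insert (vert st r, v, t) (trav st)\<rparr>"
  by (auto simp: handle_def Let_def)

lemma improvement_overwrite:
  assumes inv: "processing_inv E s ts r (u, du, sr, pr) st"
    and edge: "(u, v, t) \<in> E" "sr \<le> t" "ereal t < sig st v"
    and i: "i \<in> set (bq st)" "vert st i = v" "lev st i = Suc du"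
  shows "improvement E s ts r u du sr pr st v t i
    (st\<lparr>recs := (recs st)[i := (v, Suc du, t, Some r)], sig := (sig st)(v := ereal t)\<rparr>)"
proof -
  have "i < nrecs st" using i(1) inv unfolding processing_inv_def record_inv_def queue_wf_def by auto
  show ?thesis
  proof
    show "improves st i (v, Suc du, t, Some r)
        (st\<lparr>recs := (recs st)[i := (v, Suc du, t, Some r)], sig := (sig st)(v := ereal t)\<rparr>)"
      using \<open>i < nrecs st\<close> by (auto simp: improves_def)
    show "\<And>a. a < nrecs st \<Longrightarrow> vert st a = v \<Longrightarrow> lev st a = Suc du \<Longrightarrow> a = i"
      using inv i \<open>i < nrecs st\<close> unfolding processing_inv_def record_inv_def
      by (metis levels_consistentD(1))
  qed (use inv edge i \<open>i < nrecs st\<close> in simp_all)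
qed

lemma improvement_append:
  assumes inv: "processing_inv E s ts r (u, du, sr, pr) st"
    and edge: "(u, v, t) \<in> E" "sr \<le> t" "ereal t < sig st v"
    and fresh: "\<not> (\<exists>i\<in>set (bq st). vert st i = v \<and> lev st i = Suc du)"
  shows "improvement E s ts r u du sr pr st v t (nrecs st)
    (st\<lparr>recs := recs st @ [(v, Suc du, t, Some r)], bq := bq st @ [nrecs st], sig := (sig st)(v := ereal t)\<rparr>)"
proof
  show "improves st (nrecs st) (v, Suc du, t, Some r) (st\<lparr>recs := recs st @ [(v, Suc du, t, Some r)],
      bq := bq st @ [nrecs st], sig := (sig st)(v := ereal t)\<rparr>)"
    by (auto simp: improves_def nth_append)
  show "\<And>a. a < nrecs st \<Longrightarrow> vert st a = v \<Longrightarrow> lev st a = Suc du \<Longrightarrow> a = nrecs st"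
    using inv fresh unfolding processing_inv_def by force
qed (use inv edge in simp_all)

lemma handle_preserves_processing_inv:
  assumes inv: "processing_inv E s ts r (u, du, sr, pr) st"
    and B: "finite B" "B \<subseteq> E" "\<forall>e\<in>B. src e = u \<and> sr \<le> tm e" and v: "v \<in> dst ` B"
  defines "t \<equiv> Min {tm e |e. e \<in> B \<and> dst e = v}"
  shows "processing_inv E s ts r (u, du, sr, pr) (handle B r v st) \<and>
    reached (handle B r v st) v (Suc du) t \<and> refines st (handle B r v st)"
proof -
  have t: "t = Min {tm e |e. e \<in> B \<and> dst e = v}" by (simp add: t_def)
  obtain e where e: "e \<in> B" "dst e = v" "tm e = t" using Min_tm_edge[OF B(1) v] t by metis
  then have edge: "(u, v, t) \<in> E" "sr \<le> t" using B(2,3) edge_eta[of e] by auto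
  have r: "vert st r = u" "lev st r = du" using inv unfolding processing_inv_def by auto
  consider (none) "\<not> ereal t < sig st v"
    | (update) "ereal t < sig st v" "\<exists>i\<in>set (bq st). vert st i = v \<and> lev st i = Suc du"
    | (create) "ereal t < sig st v" "\<not> (\<exists>i\<in>set (bq st). vert st i = v \<and> lev st i = Suc du)"
    by blast
  then show ?thesis
  proof cases
    case none
    have "reached st v (Suc du) t"
      using inv none unfolding processing_inv_def record_inv_def by (intro sig_min_reached) auto
    then show ?thesis
      using handle_no_improvement[OF none t] processing_inv_traverse[OF inv] r refines_refl by simp
  next
    case update
    define i where "i = (SOME i. i \<in> set (bq st) \<and> vert st i = v \<and> lev st i = Suc du)"
    have i: "i \<in> set (bq st)" "vert st i = v" "lev st i = Suc du"
      using someI_ex[OF update(2)[unfolded Bex_def]] unfolding i_def by auto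
    have "handle B r v st = st\<lparr>recs := (recs st)[i := (v, Suc du, t, Some r)],
        sig := (sig st)(v := ereal t), trav := insert (u, v, t) (trav st)\<rparr>"
      using handle_updates[OF update(1) t] update(2) r unfolding i_def by simp
    then show ?thesis using improvement.traversed[OF improvement_overwrite[OF inv edge update(1) i]] by simp
  next
    case create
    have "handle B r v st = st\<lparr>recs := recs st @ [(v, Suc du, t, Some r)], bq := bq st @ [nrecs st],
        sig := (sig st)(v := ereal t), trav := insert (u, v, t) (trav st)\<rparr>"
      using handle_creates[OF create(1) t] create(2) r by simp
    then show ?thesis using improvement.traversed[OF improvement_append[OF inv edge create]] by simp
  qed
qed

section \<open>One iteration of the loop\<close>

lemma fold_preserves:
  assumes step: "\<And>st v. Q st \<Longrightarrow> v \<in> A \<Longrightarrow> Q (f v st) \<and> reached (f v st) v k (g v) \<and> refines st (f v st)"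
  shows "Q st \<Longrightarrow> set vs \<subseteq> A \<Longrightarrow>
    Q (fold f vs st) \<and> refines st (fold f vs st) \<and> (\<forall>v\<in>set vs. reached (fold f vs st) v k (g v))"
proof (induction vs arbitrary: st)
  case Nil
  then show ?case by (simp add: refines_refl)
next
  case (Cons v vs)
  then have "Q (f v st)" "reached (f v st) v k (g v)" "refines st (f v st)" using step by auto
  moreover note Cons.IH[OF \<open>Q (f v st)\<close>]
  ultimately show ?case using Cons.prems(2) by (auto intro: refines_trans reached_refines)
qed

lemma trav_handle: "trav st \<subseteq> trav (handle B r v st)"
  by (auto simp: handle_def Let_def)

lemma trav_fold_handle: "trav st \<subseteq> trav (fold (handle B r) vs st)"
proof (induction vs arbitrary: st)
  case (Cons v vs)
  have "trav st \<subseteq> trav (handle B r v st)" by (rule trav_handle)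
  also have "\<dots> \<subseteq> trav (fold (handle B r) vs (handle B r v st))" by (rule Cons.IH)
  finally show ?case by simp
qed simp

lemma tbfs_inv_pop:
  assumes inv: "tbfs_inv E s ts st" and q: "bq st = r # rest"
  shows "processing_inv E s ts r (recs st ! r) (st\<lparr>bq := rest\<rparr>)"
proof -
  have rec: "record_inv E s ts st" and sorted: "sorted (map (lev st) (bq st))"
    and lev_bound: "\<And>a. a < nrecs st \<Longrightarrow> lev st a \<le> Suc (lev st r)"
    and processed: "\<And>a. a < nrecs st \<Longrightarrow> a \<notin> set (bq st) \<Longrightarrow> lev st a \<le> lev st r \<and> expanded E st a"
    using inv q unfolding tbfs_inv_def by auto
  have wf: "distinct (r # rest)" "set (r # rest) \<subseteq> {..<nrecs st}"
    using rec q unfolding record_inv_def queue_wf_def by auto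
  have "record_inv E s ts (st\<lparr>bq := rest\<rparr>)"
    using rec wf q unfolding record_inv_def queue_wf_def trav_covered_def by auto
  moreover have "sorted (map (lev st) rest)" "\<forall>b\<in>set rest. lev st r \<le> lev st b"
    using sorted q by auto
  ultimately show ?thesis
    using wf lev_bound processed q unfolding processing_inv_def by auto
qed

lemma processing_inv_finish:
  assumes inv: "processing_inv E s ts r R st" and "expanded E st r"
  shows "tbfs_inv E s ts st"
proof -
  have queued: "\<And>b. b \<in> set (bq st) \<Longrightarrow> rlev R \<le> lev st b"
    and all: "\<And>a. a < nrecs st \<Longrightarrow> lev st a \<le> Suc (rlev R)"
    and processed: "\<And>a. a < nrecs st \<Longrightarrow> a \<notin> set (bq st) \<Longrightarrow>
      lev st a \<le> rlev R \<and> (a \<noteq> r \<longrightarrow> expanded E st a)"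
    using inv unfolding processing_inv_def by auto
  have "lev st a \<le> Suc (lev st b)" if "a < nrecs st" "b \<in> set (bq st)" for a b
    using all[OF that(1)] queued[OF that(2)] by simp
  moreover have "lev st a \<le> lev st b" if "a < nrecs st" "a \<notin> set (bq st)" "b \<in> set (bq st)" for a b
    using processed[OF that(1,2)] queued[OF that(3)] by simp
  moreover have "expanded E st a" if "a < nrecs st" "a \<notin> set (bq st)" for a
    using processed[OF that] assms(2) by (cases "a = r") auto
  ultimately show ?thesis using inv unfolding processing_inv_def tbfs_inv_def by blast
qed

lemma popped_record_expanded:
  assumes inv: "processing_inv E s ts r (u, du, sr, pr) st" and B: "finite B"
    and out_edges: "\<And>e. e \<in> E \<Longrightarrow> src e = u \<Longrightarrow> sr \<le> tm e \<Longrightarrow> e \<in> trav st \<or> e \<in> B"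
    and targets: "\<forall>v\<in>dst ` B. reached st v (Suc du) (Min {tm e |e. e \<in> B \<and> dst e = v})"
  shows "expanded E st r"
  unfolding expanded_def
proof (intro ballI impI)
  fix e assume e: "e \<in> E" "src e = vert st r \<and> time st r \<le> tm e"
  have r: "recs st ! r = (u, du, sr, pr)" using inv unfolding processing_inv_def by blast
  show "reached st (dst e) (Suc (lev st r)) (tm e)"
  proof (cases "e \<in> trav st")
    case True
    then obtain a where "a < nrecs st" "a \<notin> set (bq st)" "reached st (dst e) (Suc (lev st a)) (tm e)"
      using inv unfolding processing_inv_def record_inv_def trav_covered_def by blast
    moreover have "lev st a \<le> du" using inv calculation(1,2) unfolding processing_inv_def by simp
    ultimately show ?thesis using r by (auto elim: reached_mono)
  next
    case False
    then have "e \<in> B" using out_edges[of e] e r by simp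
    then have "reached st (dst e) (Suc du) (Min {tm e' |e'. e' \<in> B \<and> dst e' = dst e})"
      using targets by blast
    then show ?thesis using Min_tm_le[OF B \<open>e \<in> B\<close>] r by (auto elim: reached_mono)
  qed
qed

lemma tbfs_step_preserves_inv:
  assumes inv: "tbfs_inv E s ts st" and step: "tbfs_step E st st'" and "finite E"
  shows "tbfs_inv E s ts st'"
  using step
proof cases
  case (1 r rest B vs)
  obtain u du sr pr where R: "recs st ! r = (u, du, sr, pr)" by (metis prod_cases4)
  define st0 where "st0 = st\<lparr>bq := rest\<rparr>"
  have inv0: "processing_inv E s ts r (u, du, sr, pr) st0"
    using tbfs_inv_pop[OF inv 1(2)] R unfolding st0_def by simp
  have B: "finite B" "B \<subseteq> E" "\<forall>e\<in>B. src e = u \<and> sr \<le> tm e"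
    using \<open>finite E\<close> R unfolding 1(3) by simp_all
  have fold: "processing_inv E s ts r (u, du, sr, pr) st' \<and> refines st0 st' \<and>
      (\<forall>v\<in>set vs. reached st' v (Suc du) (Min {tm e |e. e \<in> B \<and> dst e = v}))"
    unfolding 1(1) st0_def[symmetric]
    by (rule fold_preserves[OF handle_preserves_processing_inv[OF _ B]]) (use inv0 1(5) in auto)
  moreover have "trav st \<subseteq> trav st'" using trav_fold_handle[of st0] 1(1) by (simp add: st0_def)
  then have "e \<in> trav st' \<or> e \<in> B" if "e \<in> E" "src e = u" "sr \<le> tm e" for e
    using that 1(3) R by auto
  ultimately have "expanded E st' r" using popped_record_expanded[OF _ B(1)] 1(5) by blast
  with fold show ?thesis by (blast intro: processing_inv_finish)
qed

lemma tbfs_inv_init: "tbfs_inv E s ts (tbfs_init s ts)"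
  by (simp add: tbfs_init_def tbfs_inv_def record_inv_def source_record_def queue_wf_def sig_min_def
      levels_consistent_def records_sound_def trav_covered_def)

lemma tbfs_reachable_inv:
  assumes "(tbfs_step E)\<^sup>*\<^sup>* (tbfs_init s ts) st" "finite E"
  shows "tbfs_inv E s ts st"
  using assms(1)
proof (induction rule: rtranclp_induct)
  case base
  show ?case by (rule tbfs_inv_init)
next
  case (step st st')
  from step.IH step.hyps(2) assms(2) show ?case by (rule tbfs_step_preserves_inv)
qed

theorem lemma13:
  fixes E :: "'v tedge set" and s v :: 'v and ts \<tau> :: real and d i :: nat
    and st :: "'v bstate" and p :: "nat option"
  assumes "finite E"
    and "\<forall>e\<in>E. src e \<noteq> dst e"
    and "(tbfs_step E)\<^sup>*\<^sup>* (tbfs_init s ts) st"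
    and "bq st = []"
    and "i < length (recs st)"
    and "recs st ! i = (v, d, \<tau>, p)"
    and "v \<noteq> s"
  shows "(\<exists>P. temporal_path E ts s v P \<and> length P \<le> d \<and> t_end P = \<tau>) \<and>
         (\<forall>P. temporal_path E ts s v P \<and> length P \<le> d \<longrightarrow> \<tau> \<le> t_end P)"
proof -
  have "tbfs_inv E s ts st" using assms(3,1) by (rule tbfs_reachable_inv)
  then have "source_record s ts st" "levels_consistent st" "records_sound E s ts st"
    and expanded: "\<forall>a<nrecs st. expanded E st a"
    using assms(4) unfolding tbfs_inv_def record_inv_def by auto
  have source: "reached st s 0 ts"
    using \<open>source_record s ts st\<close> unfolding source_record_def reached_def by force
  have "\<tau> \<le> t_end P" if "temporal_path E ts s v P" "length P \<le> d" for P
  proof -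
    have "reached st v d (t_end P)"
      using temporal_path_reached[OF expanded source that(1)] that(2) by (rule reached_mono) simp
    then show ?thesis by (rule levels_consistent_time_le[OF \<open>levels_consistent st\<close> assms(5,6)])
  qed
  moreover have "\<exists>P. temporal_path E ts s v P \<and> length P \<le> d \<and> t_end P = \<tau>"
    using \<open>records_sound E s ts st\<close> assms(5-7) unfolding records_sound_def by force
  ultimately show ?thesis by blast
qed

end
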